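(* Let $\phi\in UC(\mathbb{R}^{N+1})$ be almost periodic in the $m$-th variable, for some $m\in\{1,\dots,N+1\}$. Then from any real sequence $(s_n)_{n\in\mathbb{N}}$ one can extract a subsequence $(s_{n_k})_{k\in\mathbb{N}}$ such that, for every choice of $(X_1,\dots,X_{m-1},X_{m+1},\dots,X_{N+1})$, the sequence $\big(\phi(X_1,\dots,X_m+s_{n_k},\dots,X_{N+1})\big)_{k}$ converges uniformly in $X_m\in\mathbb{R}$.
   Context: $UC$ means uniformly continuous. A continuous $g:\mathbb{R}\to\mathbb{R}$ is almost periodic if from every real sequence $(s_n)$ one can extract a subsequence along which $g(\cdot+s_{n_k})$ converges uniformly on $\mathbb{R}$; $\phi$ on $\mathbb{R}^{N+1}$ is almost periodic in the $m$-th variable if for each fixed value of the other variables the function $X_m\mapsto\phi(\dots,X_m,\dots)$ is almost periodic. *)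

theory Defs
  imports "HOL-Analysis.Analysis"
begin

definition almost_periodic :: "(real \<Rightarrow> real) \<Rightarrow> bool" where
  "almost_periodic g \<longleftrightarrow> continuous_on UNIV g \<and>
     (\<forall>s :: nat \<Rightarrow> real. \<exists>r. strict_mono r \<and>
        (\<exists>h. uniform_limit UNIV (\<lambda>k x. g (x + s (r k))) h sequentially))"

definition upd_coord :: "real^'n \<Rightarrow> 'n \<Rightarrow> real \<Rightarrow> real^'n" where
  "upd_coord X m t = (\<chi> i. if i = m then t else X $ i)"

definition almost_periodic_in :: "(real^'n \<Rightarrow> real) \<Rightarrow> 'n \<Rightarrow> bool" where
  "almost_periodic_in \<phi> m \<longleftrightarrow> (\<forall>X. almost_periodic (\<lambda>t. \<phi> (upd_coord X m t)))"

end

theory Submission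
  imports Defs "HOL-Library.Diagonal_Subsequence"
begin

(* Fix a countable dense set {d 0, d 1, ...} of points of R^N+1 (the other
   coordinates).  Almost periodicity in the m-th variable lets us refine any subsequence of
   (s n) so that the shifted section through one given point d j converges uniformly;
   Cantor's diagonal argument then yields a single subsequence that works for all d j at once.
   Uniform continuity of phi makes the shifted sections through nearby points uniformly close,
   uniformly in the shift, so an e/3-argument transfers the uniform Cauchy property from the
   dense set to every point. *)

lemma uniformly_convergent_on_subseq:
  assumes "uniformly_convergent_on A f" "strict_mono r"
  shows "uniformly_convergent_on A (\<lambda>k. f (r k))"
  using uniformly_convergent_on_compose[OF assms(1) filterlim_subseq[OF assms(2)]] .

lemma uniformly_convergent_on_shift:
  fixes f :: "nat \<Rightarrow> 'a \<Rightarrow> 'b::metric_space"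
  assumes "uniformly_convergent_on A (\<lambda>k. f (j + k))"
  shows "uniformly_convergent_on A f"
proof -
  have "filterlim (\<lambda>k. k - j) sequentially sequentially"
    by (simp add: filterlim_minus_const_nat_at_top)
  then have conv: "uniformly_convergent_on A (\<lambda>k. f (j + (k - j)))"
    using uniformly_convergent_on_compose[OF assms] by blast
  have "eventually (\<lambda>k. \<forall>t\<in>A. f (j + (k - j)) t = f k t) sequentially"
    using eventually_ge_at_top[of j] by eventually_elim simp
  from uniformly_convergent_cong[OF this refl] show ?thesis
    using conv by simp
qed

lemma diagonal_uniformly_convergent_subseq:
  fixes F :: "nat \<Rightarrow> nat \<Rightarrow> 'a \<Rightarrow> 'b::metric_space"
  assumes refine: "\<And>j (q :: nat \<Rightarrow> nat). strict_mono q \<Longrightarrow>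
      \<exists>r. strict_mono r \<and> uniformly_convergent_on A (\<lambda>k. F j (q (r k)))"
  shows "\<exists>r. strict_mono r \<and> (\<forall>j. uniformly_convergent_on A (\<lambda>k. F j (r k)))"
proof -
  define P where "P j r \<longleftrightarrow> uniformly_convergent_on A (\<lambda>k. F j (r k))" for j r
  interpret subseqs P
  proof
    fix j and q :: "nat \<Rightarrow> nat" assume "strict_mono q"
    then show "\<exists>r. strict_mono r \<and> P j (q \<circ> r)"
      unfolding P_def comp_def by (rule refine)
  qed
  have stable: "P j (q \<circ> r)" if "strict_mono r" "P j q" for r q j
    using that uniformly_convergent_on_subseq unfolding P_def comp_def by blast
  \<comment> \<open>from index \<open>Suc j\<close> on, the diagonal sequence is a subsequence of the \<open>j\<close>-th refinement\<close>
  have "P j diagseq" for j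
    using diagseq_holds[OF stable, of j] uniformly_convergent_on_shift[of A "\<lambda>k. F j (diagseq k)"]
    unfolding P_def comp_def by blast
  then show ?thesis
    using subseq_diagseq unfolding P_def by blast
qed

lemma uniformly_convergent_on_from_dense:
  fixes g :: "'p::metric_space \<Rightarrow> nat \<Rightarrow> 'a \<Rightarrow> 'b::complete_space"
  assumes dense: "\<And>e. e > 0 \<Longrightarrow> \<exists>q\<in>D. dist p q < e"
    and equi: "\<And>e. e > 0 \<Longrightarrow> \<exists>\<delta>>0. \<forall>p q k t. dist p q < \<delta> \<longrightarrow> dist (g p k t) (g q k t) < e"
    and conv: "\<And>q. q \<in> D \<Longrightarrow> uniformly_convergent_on A (g q)"
  shows "uniformly_convergent_on A (g p)"
  unfolding uniformly_convergent_eq_Cauchy uniformly_Cauchy_on_def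
proof (intro allI impI)
  fix e :: real assume "e > 0"
  then obtain \<delta> where "\<delta> > 0" and \<delta>: "\<And>p q k t. dist p q < \<delta> \<Longrightarrow> dist (g p k t) (g q k t) < e/3"
    using equi[of "e/3"] by auto
  obtain q where "q \<in> D" and pq: "dist p q < \<delta>"
    using dense[OF \<open>\<delta> > 0\<close>] by blast
  then have "uniformly_Cauchy_on A (g q)"
    using conv uniformly_convergent_eq_Cauchy by blast
  then obtain M where M: "\<And>t a b. t \<in> A \<Longrightarrow> a \<ge> M \<Longrightarrow> b \<ge> M \<Longrightarrow> dist (g q a t) (g q b t) < e/3"
    unfolding uniformly_Cauchy_on_def using \<open>e > 0\<close> by (metis divide_pos_pos zero_less_numeral)
  show "\<exists>M. \<forall>t\<in>A. \<forall>a\<ge>M. \<forall>b\<ge>M. dist (g p a t) (g p b t) < e"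
  proof (intro exI ballI allI impI)
    fix t a b assume "t \<in> A" "M \<le> a" "M \<le> b"
    have "dist (g p a t) (g p b t) \<le> dist (g p a t) (g q a t) + dist (g q a t) (g q b t) + dist (g q b t) (g p b t)"
      using dist_triangle[of "g p a t" "g p b t" "g q a t"] dist_triangle[of "g q a t" "g p b t" "g q b t"]
      by linarith
    also have "\<dots> < e/3 + e/3 + e/3"
      using \<delta>[OF pq] M[OF \<open>t \<in> A\<close> \<open>M \<le> a\<close> \<open>M \<le> b\<close>] by (intro add_strict_mono) (auto simp: dist_commute)
    finally show "dist (g p a t) (g p b t) < e" by simp
  qed
qed

lemma dist_upd_coord_le: "dist (upd_coord X m u) (upd_coord Y m u) \<le> dist X Y"
  unfolding dist_norm upd_coord_def
  by (rule norm_le_componentwise_cart) (auto simp: vector_minus_component)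

lemma uniformly_continuous_sections_close:
  fixes \<phi> :: "real^'n \<Rightarrow> 'b::metric_space"
  assumes "uniformly_continuous_on UNIV \<phi>" "e > 0"
  shows "\<exists>\<delta>>0. \<forall>X Y u. dist X Y < \<delta> \<longrightarrow> dist (\<phi> (upd_coord X m u)) (\<phi> (upd_coord Y m u)) < e"
proof -
  obtain \<delta> where "\<delta> > 0" and \<delta>: "\<And>x y. dist x y < \<delta> \<Longrightarrow> dist (\<phi> x) (\<phi> y) < e"
    using assms unfolding uniformly_continuous_on_def by blast
  have "dist (\<phi> (upd_coord X m u)) (\<phi> (upd_coord Y m u)) < e" if "dist X Y < \<delta>" for X Y u
    using \<delta> dist_upd_coord_le[of X m u Y] that by (meson le_less_trans)
  then show ?thesis using \<open>\<delta> > 0\<close> by blast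
qed

lemma almost_periodic_subseq:
  fixes s :: "nat \<Rightarrow> real"
  assumes "almost_periodic g"
  shows "\<exists>r. strict_mono r \<and> uniformly_convergent_on UNIV (\<lambda>k t. g (t + s (r k)))"
  using assms unfolding almost_periodic_def uniformly_convergent_on_def by blast

theorem mainTheorem10:
  fixes \<phi> :: "real^'n \<Rightarrow> real" and m :: 'n and s :: "nat \<Rightarrow> real"
  assumes "uniformly_continuous_on UNIV \<phi>"
    and "almost_periodic_in \<phi> m"
  shows "\<exists>r. strict_mono r \<and>
           (\<forall>X :: real^'n. \<exists>h.
              uniform_limit UNIV (\<lambda>k t. \<phi> (upd_coord X m (t + s (r k)))) h sequentially)"
proof -
  obtain D :: "(real^'n) set" where "countable D" and D: "\<And>U. open U \<Longrightarrow> U \<noteq> {} \<Longrightarrow> \<exists>d\<in>D. d \<in> U"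
    using countable_dense_exists by blast
  define d where "d = from_nat_into D"
  have "D \<noteq> {}" using D[OF open_UNIV] by blast
  then have range_d: "range d = D"
    unfolding d_def using \<open>countable D\<close> by (simp add: range_from_nat_into)
  define g where "g X k t = \<phi> (upd_coord X m (t + s k))" for X k t
  have "\<exists>r. strict_mono r \<and> uniformly_convergent_on UNIV (\<lambda>k. g (d j) (q (r k)))"
    for j and q :: "nat \<Rightarrow> nat"
    using almost_periodic_subseq[of _ "s \<circ> q"] assms(2)
    unfolding almost_periodic_in_def g_def comp_def by blast
  then obtain r where "strict_mono r" and conv: "\<And>j. uniformly_convergent_on UNIV (\<lambda>k. g (d j) (r k))"
    using diagonal_uniformly_convergent_subseq[of UNIV "\<lambda>j. g (d j)"] by blast
  have "uniformly_convergent_on UNIV (\<lambda>k. g X (r k))" for X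
  proof (rule uniformly_convergent_on_from_dense[where D = D])
    show "\<exists>q\<in>D. dist X q < e" if "e > 0" for e
      using D[of "ball X e"] that by auto
    show "\<exists>\<delta>>0. \<forall>p q k t. dist p q < \<delta> \<longrightarrow> dist (g p (r k) t) (g q (r k) t) < e" if "e > 0" for e
      using uniformly_continuous_sections_close[OF assms(1) that] unfolding g_def by blast
  qed (use conv range_d in blast)
  then show ?thesis
    using \<open>strict_mono r\<close> unfolding g_def uniformly_convergent_on_def by blast
qed

end
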